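(* Let $0<p<1$ and let $G$ be a connected simple graph with $n$ vertices and $m$ edges. Then $$\min\left\{\mathcal{E}_p^+(G), \mathcal{E}_p^-(G)\right\} \geq (n-1)^{p/2}.$$
   Context: For a graph $G$ with adjacency eigenvalues $\lambda_1\ge\cdots\ge\lambda_n$ (with multiplicity), $\mathcal{E}_p^+(G) = \sum_{\lambda_i>0}\lambda_i^p$ and $\mathcal{E}_p^-(G) = \sum_{\lambda_i<0}|\lambda_i|^p$. *)

theory Defs
  imports "Jordan_Normal_Form.Char_Poly"
begin

definition simple_graph :: "nat \<Rightarrow> (nat \<Rightarrow> nat \<Rightarrow> bool) \<Rightarrow> bool" where
  "simple_graph n E \<longleftrightarrow> (\<forall>i<n. \<not> E i i) \<and> (\<forall>i<n. \<forall>j<n. E i j \<longleftrightarrow> E j i)"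

definition connected_graph :: "nat \<Rightarrow> (nat \<Rightarrow> nat \<Rightarrow> bool) \<Rightarrow> bool" where
  "connected_graph n E \<longleftrightarrow> (\<forall>i<n. \<forall>j<n. (\<lambda>x y. x < n \<and> y < n \<and> E x y)\<^sup>*\<^sup>* i j)"

definition num_edges :: "nat \<Rightarrow> (nat \<Rightarrow> nat \<Rightarrow> bool) \<Rightarrow> nat" where
  "num_edges n E = card {(i, j). i < j \<and> j < n \<and> E i j}"

definition adj_matrix :: "nat \<Rightarrow> (nat \<Rightarrow> nat \<Rightarrow> bool) \<Rightarrow> real mat" where
  "adj_matrix n E = mat n n (\<lambda>(i, j). if E i j then 1 else 0)"

text \<open>Eigenvalues counted with (algebraic) multiplicity = roots of the characteristic polynomial
  with their order; for the real symmetric adjacency matrix the char. polynomial splits over the reals.\<close>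
definition pos_p_energy :: "real \<Rightarrow> real mat \<Rightarrow> real" where
  "pos_p_energy p A = (\<Sum>x\<in>{x. poly (char_poly A) x = 0 \<and> x > 0}.
       real (order x (char_poly A)) * x powr p)"

definition neg_p_energy :: "real \<Rightarrow> real mat \<Rightarrow> real" where
  "neg_p_energy p A = (\<Sum>x\<in>{x. poly (char_poly A) x = 0 \<and> x < 0}.
       real (order x (char_poly A)) * \<bar>x\<bar> powr p)"

end

theory Submission
  imports Defs "Jordan_Normal_Form.Schur_Decomposition"
begin

text \<open>The adjacency matrix is real symmetric, so its eigenvalues \<open>\<lambda>\<^sub>i\<close> are real; a Schur
  triangularisation gives \<open>\<Sum>\<lambda>\<^sub>i = tr A = 0\<close> and \<open>\<Sum>\<lambda>\<^sub>i\<^sup>2 = tr A\<^sup>2 = 2m \<ge> 2(n - 1)\<close>,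
  as a connected graph has at least \<open>n - 1\<close> edges. Let \<open>M = max |\<lambda>\<^sub>i|\<close> and let
  \<open>S = \<Sum> max \<lambda>\<^sub>i 0\<close>, which by \<open>\<Sum>\<lambda>\<^sub>i = 0\<close> also equals \<open>\<Sum> max (-\<lambda>\<^sub>i) 0\<close>. Then \<open>M \<le> S\<close> and
  \<open>2m \<le> M \<Sum>|\<lambda>\<^sub>i| = 2MS\<close>, while \<open>\<lambda>\<^sup>p \<ge> M\<^sup>p\<^sup>-\<^sup>1 \<lambda>\<close> for \<open>0 < \<lambda> \<le> M\<close>. Hence
  \<open>\<E>\<^sub>p\<^sup>+ \<ge> M\<^sup>p\<^sup>-\<^sup>1 S \<ge> m\<^sup>p\<^sup>/\<^sup>2\<close>, where the last step uses \<open>M \<le> S\<close> if \<open>m \<le> M\<^sup>2\<close> and \<open>m \<le> MS\<close>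
  otherwise. The same argument applied to the negated eigenvalues bounds \<open>\<E>\<^sub>p\<^sup>-\<close>.\<close>

definition mat_trace :: "'a::comm_monoid_add mat \<Rightarrow> 'a" where
  "mat_trace A = (\<Sum>i<dim_row A. A $$ (i, i))"

lemma mat_trace_mult_comm:
  fixes A B :: "'a::comm_semiring_0 mat"
  assumes "A \<in> carrier_mat n m" "B \<in> carrier_mat m n"
  shows "mat_trace (A * B) = mat_trace (B * A)"
proof -
  have "mat_trace (A * B) = (\<Sum>i<n. \<Sum>k<m. A $$ (i, k) * B $$ (k, i))"
    using assms by (simp add: mat_trace_def scalar_prod_def atLeast0LessThan)
  also have "\<dots> = (\<Sum>k<m. \<Sum>i<n. B $$ (k, i) * A $$ (i, k))"
    by (subst sum.swap) (simp add: mult.commute)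
  also have "\<dots> = mat_trace (B * A)"
    using assms by (simp add: mat_trace_def scalar_prod_def atLeast0LessThan)
  finally show ?thesis .
qed

lemma mat_trace_similar:
  fixes A B :: "'a::comm_ring_1 mat"
  assumes "similar_mat A B"
  shows "mat_trace A = mat_trace B"
proof -
  obtain n P Q where car: "A \<in> carrier_mat n n" "B \<in> carrier_mat n n" "P \<in> carrier_mat n n" "Q \<in> carrier_mat n n"
    and QP: "Q * P = 1\<^sub>m n" and A: "A = P * B * Q"
    using similar_matD[OF assms] by auto
  have "mat_trace A = mat_trace (P * (B * Q))"
    using car by (simp add: A assoc_mult_mat[of P n n B n Q n])
  also have "\<dots> = mat_trace (B * Q * P)"
    using car by (intro mat_trace_mult_comm[of _ n n]) auto
  also have "B * Q * P = B"
    using car by (simp add: assoc_mult_mat[of B n n Q n P n] QP)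
  finally show ?thesis .
qed

lemma upper_triangular_mult_diag:
  assumes "B \<in> carrier_mat n n" "C \<in> carrier_mat n n"
    and "upper_triangular B" "upper_triangular C" and "i < n"
  shows "(B * C) $$ (i, i) = B $$ (i, i) * C $$ (i, i)"
proof -
  have "(B * C) $$ (i, i) = (\<Sum>k\<in>{0..<n}. B $$ (i, k) * C $$ (k, i))"
    using assms by (simp add: scalar_prod_def)
  also have "\<dots> = (\<Sum>k\<in>{i}. B $$ (i, k) * C $$ (k, i))"
  proof (rule sum.mono_neutral_right)
    show "\<forall>k\<in>{0..<n} - {i}. B $$ (i, k) * C $$ (k, i) = 0"
    proof
      fix k assume "k \<in> {0..<n} - {i}"
      then consider "k < i" | "i < k" "k < n" by fastforce
      then show "B $$ (i, k) * C $$ (k, i) = 0"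
        by cases (use assms in \<open>auto simp: upper_triangularD\<close>)
    qed
  qed (use assms in auto)
  finally show ?thesis by simp
qed

lemma char_poly_linear_factors_trace:
  fixes A :: "'a::conjugatable_ordered_field mat"
  assumes A: "A \<in> carrier_mat n n" and split: "char_poly A = (\<Prod>e\<leftarrow>es. [:- e, 1:])"
  shows "sum_list es = mat_trace A"
    and "(\<Sum>e\<leftarrow>es. e ^ 2) = mat_trace (A * A)"
proof -
  obtain B P Q where "schur_decomposition A es = (B, P, Q)"
    by (cases "schur_decomposition A es") auto
  from schur_decomposition[OF A split this] have wit: "similar_mat_wit A B P Q"
    and ut: "upper_triangular B" and diag: "diag_mat B = es" by auto
  have B: "B \<in> carrier_mat n n" using similar_mat_witD2[OF A wit] by auto
  have es: "es = map (\<lambda>i. B $$ (i, i)) [0..<n]" using diag B by (auto simp: diag_mat_def)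
  have "sum_list es = mat_trace B"
    using B by (simp add: es mat_trace_def sum_list_sum_nth atLeast0LessThan)
  also have "\<dots> = mat_trace A"
    using wit by (metis mat_trace_similar similar_mat_def)
  finally show "sum_list es = mat_trace A" .
  have "(B * B) $$ (i, i) = B $$ (i, i) ^ 2" if "i < n" for i
    using upper_triangular_mult_diag[OF B B ut ut that] by (simp add: power2_eq_square)
  then have "(\<Sum>e\<leftarrow>es. e ^ 2) = mat_trace (B * B)"
    using B by (simp add: es mat_trace_def sum_list_sum_nth atLeast0LessThan)
  also have "\<dots> = mat_trace (A * A)"
  proof -
    have "similar_mat (A * A) (B * B)"
      using similar_mat_wit_pow[OF wit, of 2] A B by (auto simp: similar_mat_def numeral_2_eq_2)
    then show ?thesis by (simp add: mat_trace_similar)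
  qed
  finally show "(\<Sum>e\<leftarrow>es. e ^ 2) = mat_trace (A * A)" .
qed

lemma real_symmetric_eigenvalue_real:
  fixes A :: "real mat"
  assumes A: "A \<in> carrier_mat n n" and sym: "transpose_mat A = A"
    and ev: "eigenvalue (map_mat complex_of_real A) a"
  shows "a \<in> \<real>"
proof -
  let ?C = "map_mat complex_of_real A"
  have C: "?C \<in> carrier_mat n n" using A by simp
  obtain v where v: "v \<in> carrier_vec n" "v \<noteq> 0\<^sub>v n" and Cv: "?C *\<^sub>v v = a \<cdot>\<^sub>v v"
    using ev A unfolding eigenvalue_def eigenvector_def by auto
  have Ct: "transpose_mat ?C = ?C"
    by (metis map_mat_transpose sym)
  have C_conj: "?C *\<^sub>v conjugate v = conjugate (?C *\<^sub>v v)"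
  proof (rule eq_vecI)
    fix i assume "i < dim_vec (conjugate (?C *\<^sub>v v))"
    then have i: "i < n" using A by simp
    have "conjugate (row ?C i) = row ?C i"
      using A i by (intro eq_vecI) (auto simp: conjugate_complex_def)
    then have "conjugate (row ?C i \<bullet> v) = row ?C i \<bullet> conjugate v"
      using conjugate_sprod_vec[of "row ?C i" n v] A i v(1) by simp
    then show "(?C *\<^sub>v conjugate v) $ i = conjugate (?C *\<^sub>v v) $ i"
      using A i v(1) by simp
  qed (use A in simp)
  let ?q = "conjugate v \<bullet> v"
  have q: "?q \<noteq> 0"
    using v conjugate_square_greater_0_vec[OF v(1)] conjugate_vec_sprod_comm[OF v(1) v(1)] by auto
  have "a * ?q = conjugate v \<bullet> (?C *\<^sub>v v)"
    using v(1) by (simp add: Cv)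
  also have "\<dots> = (?C *\<^sub>v conjugate v) \<bullet> v"
    using transpose_vec_mult_scalar[OF C v(1), of "conjugate v"] v(1) by (simp add: Ct)
  also have "\<dots> = cnj a * ?q"
    using v(1) by (simp add: C_conj Cv conjugate_smult_vec conjugate_complex_def)
  finally have "cnj a = a" using q by simp
  then show ?thesis by (simp add: Reals_cnj_iff)
qed

lemma real_symmetric_char_poly_linear_factors:
  fixes A :: "real mat"
  assumes A: "A \<in> carrier_mat n n" and sym: "transpose_mat A = A"
  obtains rs where "char_poly A = (\<Prod>r\<leftarrow>rs. [:- r, 1:])"
proof -
  interpret of_real_poly: map_poly_inj_idom_hom "complex_of_real" ..
  let ?C = "map_mat complex_of_real A"
  have C: "?C \<in> carrier_mat n n" using A by simp
  obtain as where as: "char_poly ?C = (\<Prod>a\<leftarrow>as. [:- a, 1:])"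
    using char_poly_factorized[OF C] by auto
  have real: "a \<in> \<real>" if "a \<in> set as" for a
  proof (rule real_symmetric_eigenvalue_real[OF A sym])
    show "eigenvalue ?C a"
      using linear_poly_root[OF that] by (simp add: eigenvalue_root_char_poly[OF C] as)
  qed
  have "as = map complex_of_real (map Re as)"
    unfolding map_map by (rule map_idI[symmetric]) (use real in \<open>auto elim: Reals_cases\<close>)
  then obtain rs where rs: "as = map complex_of_real rs" ..
  have "map_poly complex_of_real (char_poly A) = map_poly complex_of_real (\<Prod>r\<leftarrow>rs. [:- r, 1:])"
    by (simp add: of_real_hom.char_poly_hom[OF A, symmetric] as rs of_real_poly.hom_prod_list o_def)
  then show ?thesis by (intro that) simp
qed

lemma sum_list_map_eq_sum_count_of_nat:
  fixes f :: "'a \<Rightarrow> 'b::semiring_1"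
  shows "sum_list (map f xs) = (\<Sum>x\<in>set xs. of_nat (count_list xs x) * f x)"
proof (induction xs)
  case (Cons y xs)
  have "(\<Sum>x\<in>set (y # xs). of_nat (count_list (y # xs) x) * f x)
      = (\<Sum>x\<in>insert y (set xs). of_nat (count_list xs x) * f x + (if x = y then f x else 0))"
    by (intro sum.cong) (auto simp: distrib_right add.commute)
  also have "\<dots> = (\<Sum>x\<in>insert y (set xs). of_nat (count_list xs x) * f x) + f y"
    by (simp add: sum.distrib)
  also have "(\<Sum>x\<in>insert y (set xs). of_nat (count_list xs x) * f x)
      = (\<Sum>x\<in>set xs. of_nat (count_list xs x) * f x)"
    by (cases "y \<in> set xs") (simp_all add: insert_absorb count_list_0_iff)
  finally show ?case by (simp add: Cons.IH add.commute)
qed simp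

lemma order_linear_factors:
  fixes x :: "'a::idom"
  shows "Polynomial.order x (\<Prod>r\<leftarrow>rs. [:- r, 1:]) = count_list rs x"
proof (induction rs)
  case (Cons r rs)
  have "[:- r, 1:] * (\<Prod>r\<leftarrow>rs. [:- r, 1:]) \<noteq> 0"
    by (auto simp del: mult_pCons_left simp: prod_list_zero_iff)
  then show ?case
    using Cons.IH by (simp del: mult_pCons_left add: order_mult order_linear')
qed simp

lemma poly_linear_factors_eq_0_iff:
  fixes x :: "'a::idom"
  shows "poly (\<Prod>r\<leftarrow>rs. [:- r, 1:]) x = 0 \<longleftrightarrow> x \<in> set rs"
  by (induction rs) auto

lemma sum_roots_linear_factors:
  fixes rs :: "real list" and f :: "real \<Rightarrow> real"
  defines "q \<equiv> \<Prod>r\<leftarrow>rs. [:- r, 1:]"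
  shows "(\<Sum>x\<in>{x. poly q x = 0 \<and> P x}. real (Polynomial.order x q) * f x) = (\<Sum>r\<leftarrow>rs. if P r then f r else 0)"
proof -
  have "(\<Sum>r\<leftarrow>rs. if P r then f r else 0) = (\<Sum>x\<in>set rs. real (count_list rs x) * (if P x then f x else 0))"
    by (rule sum_list_map_eq_sum_count_of_nat)
  also have "\<dots> = (\<Sum>x\<in>{x \<in> set rs. P x}. real (count_list rs x) * f x)"
    by (auto simp: sum.inter_filter intro!: sum.cong)
  finally show ?thesis
    by (simp add: q_def poly_linear_factors_eq_0_iff order_linear_factors)
qed

lemma mult_powr_minus_one_le_powr:
  fixes x M p :: real
  assumes "0 < x" "x \<le> M" "p \<le> 1"
  shows "M powr (p - 1) * x \<le> x powr p"
proof -
  have "M powr (p - 1) * x \<le> x powr (p - 1) * x"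
    using assms by (intro mult_right_mono powr_mono2') auto
  also have "\<dots> = x powr p"
    using assms by (simp add: powr_mult_base mult.commute)
  finally show ?thesis .
qed

lemma powr_half_le_mult_powr_minus_one:
  fixes N M S p :: real
  assumes p: "0 \<le> p" "p \<le> 1" and "0 \<le> N" "0 < M" "M \<le> S" "N \<le> M * S"
  shows "N powr (p / 2) \<le> M powr (p - 1) * S"
proof -
  have sq: "(M\<^sup>2) powr e = M powr (2 * e)" for e
  proof -
    have "M\<^sup>2 = M powr 2" using \<open>0 < M\<close> by simp
    then show ?thesis by (metis powr_powr)
  qed
  show ?thesis
  proof (cases "N \<le> M\<^sup>2")
    case True
    have "N powr (p / 2) \<le> (M\<^sup>2) powr (p / 2)"
      using True assms by (intro powr_mono2) auto
    also have "\<dots> = M powr (p - 1) * M"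
      using powr_mult_base[of M "p - 1"] \<open>0 < M\<close> by (simp add: sq mult.commute)
    also have "\<dots> \<le> M powr (p - 1) * S"
      using assms by (intro mult_left_mono) auto
    finally show ?thesis .
  next
    case False
    moreover have "0 < M\<^sup>2" using \<open>0 < M\<close> by simp
    ultimately have "0 < N" by linarith
    have "N powr (p / 2) = N * N powr (p / 2 - 1)"
      using powr_mult_base[of N "p / 2 - 1"] \<open>0 < N\<close> by simp
    also have "\<dots> \<le> N * (M\<^sup>2) powr (p / 2 - 1)"
      using False p \<open>0 < N\<close> \<open>0 < M\<close> by (intro mult_left_mono powr_mono2') auto
    also have "(M\<^sup>2) powr (p / 2 - 1) = M powr (p - 1) / M"
      using powr_diff[of M "p - 1" 1] \<open>0 < M\<close> by (simp add: sq algebra_simps)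
    also have "N * (M powr (p - 1) / M) = M powr (p - 1) * (N / M)"
      by simp
    also have "\<dots> \<le> M powr (p - 1) * S"
      using assms by (intro mult_left_mono) (auto simp: divide_le_eq mult.commute)
    finally show ?thesis .
  qed
qed

lemma sum_list_zero_pos_part_bounds:
  fixes xs :: "real list"
  assumes sum: "sum_list xs = 0" and bound: "\<And>x. x \<in> set xs \<Longrightarrow> \<bar>x\<bar> \<le> M"
  shows "(\<Sum>x\<leftarrow>xs. x\<^sup>2) \<le> 2 * M * (\<Sum>x\<leftarrow>xs. max x 0)"
    and "y \<in> set xs \<Longrightarrow> \<bar>y\<bar> \<le> (\<Sum>x\<leftarrow>xs. max x 0)"
proof -
  let ?S = "\<Sum>x\<leftarrow>xs. max x 0"
  have "(\<Sum>x\<leftarrow>xs. max x 0 - max (- x) 0) = sum_list xs"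
    by (induction xs) (auto simp: max_def)
  with sum have neg: "(\<Sum>x\<leftarrow>xs. max (- x) 0) = ?S"
    by (simp add: sum_list_subtractf)
  have "(\<Sum>x\<leftarrow>xs. x\<^sup>2) \<le> (\<Sum>x\<leftarrow>xs. M * max x 0 + M * max (- x) 0)"
  proof (rule sum_list_mono)
    fix x assume "x \<in> set xs"
    then have "\<bar>x\<bar> * \<bar>x\<bar> \<le> M * \<bar>x\<bar>"
      using bound by (intro mult_right_mono) auto
    moreover have "M * max x 0 + M * max (- x) 0 = M * \<bar>x\<bar>"
      by (cases "0 \<le> x") auto
    ultimately show "x\<^sup>2 \<le> M * max x 0 + M * max (- x) 0"
      by (simp add: power2_eq_square)
  qed
  also have "\<dots> = 2 * M * ?S"
    by (simp add: sum_list_addf sum_list_const_mult neg)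
  finally show "(\<Sum>x\<leftarrow>xs. x\<^sup>2) \<le> 2 * M * ?S" .
  assume y: "y \<in> set xs"
  have "max y 0 \<le> ?S" and "max (- y) 0 \<le> (\<Sum>x\<leftarrow>xs. max (- x) 0)"
    by (rule member_le_sum_list; use y in \<open>simp only: set_map\<close>; force)+
  then show "\<bar>y\<bar> \<le> ?S"
    unfolding neg by (cases "0 \<le> y") (simp_all add: max_absorb1 max_absorb2)
qed

lemma sum_list_pos_powr_ge:
  fixes xs :: "real list" and N p :: real
  assumes sum: "sum_list xs = 0" and sq: "2 * N \<le> (\<Sum>x\<leftarrow>xs. x\<^sup>2)"
    and "0 \<le> N" and p: "0 \<le> p" "p \<le> 1"
  shows "N powr (p / 2) \<le> (\<Sum>x\<leftarrow>xs. if 0 < x then x powr p else 0)"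
proof (cases "N = 0")
  case True
  then show ?thesis by (auto intro!: sum_list_nonneg)
next
  case False
  then have "xs \<noteq> []" using sq \<open>0 \<le> N\<close> by auto
  define M where "M = Max (abs ` set xs)"
  have M: "M \<in> abs ` set xs" unfolding M_def using \<open>xs \<noteq> []\<close> by (intro Max_in) auto
  have bound: "\<bar>x\<bar> \<le> M" if "x \<in> set xs" for x
    unfolding M_def using that by (intro Max_ge) auto
  let ?S = "\<Sum>x\<leftarrow>xs. max x 0"
  have "M \<le> ?S"
    using M sum_list_zero_pos_part_bounds(2)[OF sum bound] by auto
  moreover have "N \<le> M * ?S"
    using sq sum_list_zero_pos_part_bounds(1)[OF sum bound] by simp
  moreover have "0 < M"
    using M False \<open>0 \<le> N\<close> \<open>N \<le> M * ?S\<close> by (auto simp: not_less_iff_gr_or_eq)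
  ultimately have "N powr (p / 2) \<le> M powr (p - 1) * ?S"
    using p \<open>0 \<le> N\<close> by (intro powr_half_le_mult_powr_minus_one) auto
  also have "\<dots> = (\<Sum>x\<leftarrow>xs. M powr (p - 1) * max x 0)"
    by (simp add: sum_list_const_mult)
  also have "\<dots> \<le> (\<Sum>x\<leftarrow>xs. if 0 < x then x powr p else 0)"
  proof (rule sum_list_mono)
    fix x assume "x \<in> set xs"
    then have "\<bar>x\<bar> \<le> M" by (rule bound)
    then show "M powr (p - 1) * max x 0 \<le> (if 0 < x then x powr p else 0)"
      using p by (auto intro: mult_powr_minus_one_le_powr)
  qed
  finally show ?thesis .
qed

lemma connected_graph_cut_edge:
  assumes conn: "connected_graph n E" and S: "S \<subseteq> {..<n}" "i \<in> S" and w: "w < n" "w \<notin> S"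
  obtains u v where "u \<in> S" "v < n" "v \<notin> S" "E u v"
proof -
  have "(\<lambda>x y. x < n \<and> y < n \<and> E x y)\<^sup>*\<^sup>* i w"
    using conn S w unfolding connected_graph_def by blast
  then have "\<exists>u v. u \<in> S \<and> v < n \<and> v \<notin> S \<and> E u v"
    using \<open>w \<notin> S\<close>
  proof (induction rule: rtranclp_induct)
    case base
    with \<open>i \<in> S\<close> show ?case by simp
  next
    case (step y z)
    then show ?case by (cases "y \<in> S") auto
  qed
  then show ?thesis using that by blast
qed

definition induced_edges :: "(nat \<Rightarrow> nat \<Rightarrow> bool) \<Rightarrow> nat set \<Rightarrow> (nat \<times> nat) set" where
  "induced_edges E S = {(i, j). i < j \<and> i \<in> S \<and> j \<in> S \<and> E i j}"

lemma finite_induced_edges: "finite S \<Longrightarrow> finite (induced_edges E S)"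
  by (rule finite_subset[of _ "S \<times> S"]) (auto simp: induced_edges_def)

lemma num_edges_eq_card_induced_edges: "num_edges n E = card (induced_edges E {..<n})"
  unfolding num_edges_def induced_edges_def by (rule arg_cong[where f = card]) auto

lemma connected_graph_induced_edges_ge:
  assumes sg: "simple_graph n E" and conn: "connected_graph n E" and k: "1 \<le> k" "k \<le> n"
  shows "\<exists>S \<subseteq> {..<n}. card S = k \<and> k - 1 \<le> card (induced_edges E S)"
  using k
proof (induction k rule: nat_induct_at_least)
  case base
  then show ?case by (intro exI[of _ "{0}"]) auto
next
  case (Suc k)
  then obtain S where S: "S \<subseteq> {..<n}" "card S = k" "k - 1 \<le> card (induced_edges E S)"
    by auto
  have "finite S" using S(1) finite_nat_iff_bounded by blast
  obtain i where "i \<in> S" using S(2) \<open>1 \<le> k\<close> by (metis card.empty ex_in_conv not_one_le_zero)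
  have "S \<noteq> {..<n}" using S(2) \<open>Suc k \<le> n\<close> by auto
  then obtain w where "w < n" "w \<notin> S" using S(1) by blast
  then obtain u v where uv: "u \<in> S" "v < n" "v \<notin> S" "E u v"
    using connected_graph_cut_edge[OF conn S(1) \<open>i \<in> S\<close>] by blast
  have "E v u" using sg uv S(1) unfolding simple_graph_def by blast
  have "u \<noteq> v" using uv by blast
  define e where "e = (min u v, max u v)"
  have "insert e (induced_edges E S) \<subseteq> induced_edges E (insert v S)"
    using uv \<open>E v u\<close> \<open>u \<noteq> v\<close> by (auto simp: e_def induced_edges_def min_def max_def)
  moreover have "e \<notin> induced_edges E S"
    using uv by (auto simp: e_def induced_edges_def min_def max_def)
  ultimately have "card (induced_edges E S) + 1 \<le> card (induced_edges E (insert v S))"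
    using \<open>finite S\<close> by (metis card_insert_disjoint card_mono finite_induced_edges
        finite_insert Suc_eq_plus1)
  then show ?case
    using S \<open>finite S\<close> uv by (intro exI[of _ "insert v S"]) auto
qed

lemma connected_graph_num_edges_ge:
  assumes "simple_graph n E" "connected_graph n E"
  shows "n - 1 \<le> num_edges n E"
proof (cases "n = 0")
  case False
  then obtain S where S: "S \<subseteq> {..<n}" "n - 1 \<le> card (induced_edges E S)"
    using connected_graph_induced_edges_ge[OF assms, of n] by auto
  have "induced_edges E S \<subseteq> induced_edges E {..<n}"
    using S(1) by (auto simp: induced_edges_def)
  then have "card (induced_edges E S) \<le> num_edges n E"
    by (simp add: num_edges_eq_card_induced_edges card_mono finite_induced_edges)
  with S(2) show ?thesis by simp
qed simp

lemma adj_matrix_carrier [simp]: "adj_matrix n E \<in> carrier_mat n n"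
  by (simp add: adj_matrix_def)

lemma transpose_adj_matrix:
  assumes "simple_graph n E"
  shows "transpose_mat (adj_matrix n E) = adj_matrix n E"
  using assms by (intro eq_matI) (auto simp: adj_matrix_def simple_graph_def)

lemma mat_trace_adj_matrix:
  assumes "simple_graph n E"
  shows "mat_trace (adj_matrix n E) = 0"
  using assms by (simp add: mat_trace_def adj_matrix_def simple_graph_def)

lemma mat_trace_adj_matrix_square:
  assumes sg: "simple_graph n E"
  shows "mat_trace (adj_matrix n E * adj_matrix n E) = 2 * real (num_edges n E)"
proof -
  have irrefl: "\<not> E i i" if "i < n" for i
    using sg that unfolding simple_graph_def by auto
  have sym: "E i j = E j i" if "i < n" "j < n" for i j
    using sg that unfolding simple_graph_def by auto
  define L where "L = induced_edges E {..<n}"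
  define D where "D = {(i, j). i < n \<and> j < n \<and> E i j}"
  have "D = L \<union> prod.swap ` L"
    unfolding D_def L_def induced_edges_def using irrefl sym
    by (auto simp: image_def) (metis linorder_neqE_nat)+
  moreover have "L \<inter> prod.swap ` L = {}"
    unfolding L_def by (auto simp: induced_edges_def)
  moreover have "finite L"
    unfolding L_def by (simp add: finite_induced_edges)
  ultimately have card_D: "card D = 2 * num_edges n E"
    by (simp add: num_edges_eq_card_induced_edges L_def[symmetric] card_Un_disjoint card_image)
  have "mat_trace (adj_matrix n E * adj_matrix n E) = (\<Sum>i<n. \<Sum>k<n. if E i k then 1 else 0)"
    unfolding mat_trace_def adj_matrix_def
    by (auto simp: scalar_prod_def sym atLeast0LessThan intro!: sum.cong)
  also have "\<dots> = (\<Sum>q\<in>{..<n} \<times> {..<n}. if E (fst q) (snd q) then 1 else 0)"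
    by (simp add: sum.cartesian_product case_prod_beta)
  also have "\<dots> = real (card D)"
  proof -
    have "D = {q \<in> {..<n} \<times> {..<n}. E (fst q) (snd q)}" unfolding D_def by auto
    then show ?thesis by (simp add: sum.If_cases Int_def)
  qed
  finally show ?thesis by (simp add: card_D)
qed

theorem theorem5p7:
  fixes p :: real and n m :: nat and E :: "nat \<Rightarrow> nat \<Rightarrow> bool"
  assumes "0 < p" "p < 1"
    and "n \<ge> 1"
    and "simple_graph n E" "connected_graph n E"
    and "m = num_edges n E"
  shows "min (pos_p_energy p (adj_matrix n E)) (neg_p_energy p (adj_matrix n E))
           \<ge> (real n - 1) powr (p / 2)"
proof -
  let ?A = "adj_matrix n E"
  obtain rs where split: "char_poly ?A = (\<Prod>r\<leftarrow>rs. [:- r, 1:])"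
    using real_symmetric_char_poly_linear_factors[OF adj_matrix_carrier transpose_adj_matrix]
      \<open>simple_graph n E\<close> by blast
  have sum: "sum_list rs = 0"
    using char_poly_linear_factors_trace(1)[OF adj_matrix_carrier split]
      mat_trace_adj_matrix[OF \<open>simple_graph n E\<close>] by simp
  have "real (n - 1) \<le> real (num_edges n E)"
    using connected_graph_num_edges_ge \<open>simple_graph n E\<close> \<open>connected_graph n E\<close> by simp
  then have sq: "2 * (real n - 1) \<le> (\<Sum>r\<leftarrow>rs. r\<^sup>2)"
    using char_poly_linear_factors_trace(2)[OF adj_matrix_carrier split]
      mat_trace_adj_matrix_square[OF \<open>simple_graph n E\<close>] \<open>n \<ge> 1\<close>
    by (simp add: of_nat_diff)
  have pos: "(real n - 1) powr (p / 2) \<le> pos_p_energy p ?A"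
    using sum_list_pos_powr_ge[OF sum sq] \<open>0 < p\<close> \<open>p < 1\<close> \<open>n \<ge> 1\<close>
    by (simp add: pos_p_energy_def split sum_roots_linear_factors[where P = "\<lambda>x. 0 < x"])
  have "sum_list (map uminus rs) = 0"
    using uminus_sum_list_map[of id rs] sum by simp
  then have neg: "(real n - 1) powr (p / 2) \<le> neg_p_energy p ?A"
    using sum_list_pos_powr_ge[of "map uminus rs"] sq \<open>0 < p\<close> \<open>p < 1\<close> \<open>n \<ge> 1\<close>
    by (simp add: neg_p_energy_def split sum_roots_linear_factors[where P = "\<lambda>x. x < 0"] o_def)
  show ?thesis using pos neg by simp
qed

end
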